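(* Let $b_1,\dots,b_m$ be background frames and $f$ a foreground frame, with a distance $d$ satisfying the triangle inequality and $d(b_j,b_{j+1})\le\delta$ for all $1\le j<m$. Suppose $b_i$ is a strong match for $f$, with $d(f,b_i)$ uniformly distributed on $[0,\Psi]$. Let the window size be $\gamma=\Psi/\delta$, assumed to be an integer with $1\le i-\gamma$ and $i+\gamma\le m$. Then the expected number of strong matches for $f$ in the entire window $b_{i-\gamma},\dots,b_{i+\gamma}$ (of size $2\gamma+1$) is at least $\gamma$.
   Context: A background frame $b$ is a strong match for a foreground frame $f$ if $d(f,b)\le\Psi$, where $\Psi>0$ is a fixed threshold. Randomized model: given that $\{f,b\}$ is a strong match, the distance $d(f,b)$ is modeled as a sample from the uniform distribution on $[0,\Psi]$. *)

theory Defs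
  imports "HOL-Probability.Probability"
begin

definition strong_match :: "('a \<Rightarrow> 'a \<Rightarrow> real) \<Rightarrow> real \<Rightarrow> 'a \<Rightarrow> 'a \<Rightarrow> bool" where
  "strong_match d \<Psi> f b \<longleftrightarrow> d f b \<le> \<Psi>"

end

theory Submission imports Defs begin

text \<open>Let \<open>X = d(f, b\<^sub>i)\<close>. By the triangle inequality and the step bound, \<open>d(f, b\<^sub>j) \<le> X + |j - i| \<delta>\<close>,
  so \<open>b\<^sub>j\<close> is a strong match whenever \<open>X \<le> (\<gamma> - |j - i|) \<delta>\<close>, an event of probability
  \<open>(\<gamma> - |j - i|) / \<gamma>\<close> since \<open>X\<close> is uniform on \<open>[0, \<gamma> \<delta>]\<close>. Summing these "tent" probabilities over
  the window gives \<open>\<gamma>\<^sup>2 / \<gamma> = \<gamma>\<close>.\<close>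

lemma dist_le_steps:
  fixes d :: "'a \<Rightarrow> 'a \<Rightarrow> real" and b :: "nat \<Rightarrow> 'a"
  assumes tri: "\<And>x y z. d x z \<le> d x y + d y z"
    and step: "\<And>k. a \<le> k \<Longrightarrow> k < c \<Longrightarrow> d (b k) (b (Suc k)) \<le> \<delta>"
    and "a < c"
  shows "d (b a) (b c) \<le> real (c - a) * \<delta>"
proof -
  have "Suc a \<le> c" using \<open>a < c\<close> by simp
  then show ?thesis
    using step
  proof (induction c rule: dec_induct)
    case base
    then show ?case by simp
  next
    case (step c)
  have "d (b a) (b (Suc c)) \<le> d (b a) (b c) + d (b c) (b (Suc c))"
    by (rule tri)
  also have "\<dots> \<le> real (c - a) * \<delta> + \<delta>"
    using step by (intro add_mono) auto
  finally show ?case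
    using step by (simp add: Suc_diff_le algebra_simps)
  qed
qed

text \<open>\<open>d x x = 0\<close> is not assumed, hence \<open>i \<noteq> j\<close>.\<close>

lemma dist_le_index_dist:
  fixes d :: "'a \<Rightarrow> 'a \<Rightarrow> real" and b :: "nat \<Rightarrow> 'a"
  assumes sym: "\<And>x y. d x y = d y x"
    and tri: "\<And>x y z. d x z \<le> d x y + d y z"
    and step: "\<And>k. lo \<le> k \<Longrightarrow> k < hi \<Longrightarrow> d (b k) (b (Suc k)) \<le> \<delta>"
    and "i \<in> {lo..hi}" "j \<in> {lo..hi}" "i \<noteq> j"
  shows "d (b i) (b j) \<le> \<bar>real j - real i\<bar> * \<delta>"
proof (cases "i < j")
  case True
  have "d (b i) (b j) \<le> real (j - i) * \<delta>"
    by (rule dist_le_steps[OF tri _ True]) (use step assms(4,5) in auto)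
  then show ?thesis using True by (simp add: of_nat_diff)
next
  case False
  then have "j < i" using \<open>i \<noteq> j\<close> by simp
  have "d (b j) (b i) \<le> real (i - j) * \<delta>"
    by (rule dist_le_steps[OF tri _ \<open>j < i\<close>]) (use step assms(4,5) in auto)
  then show ?thesis using \<open>j < i\<close> sym[of "b i"] by (simp add: of_nat_diff)
qed

lemma strong_match_within_window:
  fixes d :: "'a \<Rightarrow> 'a \<Rightarrow> real" and b :: "nat \<Rightarrow> 'a"
  assumes sym: "\<And>x y. d x y = d y x"
    and tri: "\<And>x y z. d x z \<le> d x y + d y z"
    and step: "\<And>k. lo \<le> k \<Longrightarrow> k < hi \<Longrightarrow> d (b k) (b (Suc k)) \<le> \<delta>"
    and "i \<in> {lo..hi}" "j \<in> {lo..hi}"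
    and close: "d f (b i) \<le> \<Psi> - \<bar>real j - real i\<bar> * \<delta>"
  shows "strong_match d \<Psi> f (b j)"
proof (cases "j = i")
  case False
  have "d f (b j) \<le> d f (b i) + d (b i) (b j)" by (rule tri)
  also have "d (b i) (b j) \<le> \<bar>real j - real i\<bar> * \<delta>"
    using dist_le_index_dist[where b=b, OF sym tri step] assms(4,5) False by blast
  finally show ?thesis using close by (simp add: strong_match_def)
qed (use close in \<open>simp add: strong_match_def\<close>)

lemma sum_tent_eq_square:
  fixes i g :: nat
  assumes "g \<le> i"
  shows "(\<Sum>j\<in>{i-g..i+g}. real g - \<bar>real j - real i\<bar>) = real g ^ 2"
proof -
  let ?F = "\<lambda>j::nat. real g - \<bar>real j - real i\<bar>"
  have split: "{i-g..i+g} = {i-g..<i} \<union> {i..i+g}" using assms by auto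
  have "sum ?F {i-g..i+g} = sum ?F {i-g..<i} + sum ?F {i..i+g}"
    unfolding split by (rule sum.union_disjoint) auto
  also have "sum ?F {i-g..<i} = (\<Sum>k\<in>{0..<g}. ?F (k + (i-g)))"
    using sum.shift_bounds_nat_ivl[of ?F 0 "i-g" g] assms by simp
  also have "\<dots> = (\<Sum>k\<in>{0..<g}. real k)"
    by (rule sum.cong) (use assms in auto)
  also have "sum ?F {i..i+g} = (\<Sum>k\<in>{0..g}. ?F (k + i))"
    using sum.shift_bounds_cl_nat_ivl[of ?F 0 i g] by (simp add: add.commute)
  also have "\<dots> = (\<Sum>k\<in>{0..g}. real g - real k)"
    by (rule sum.cong) auto
  also have "\<dots> = real g * (real g + 1) - (\<Sum>k\<in>{0..g}. real k)"
    by (simp add: sum_subtractf)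
  also have "(\<Sum>k\<in>{0..g}. real k) = (\<Sum>k\<in>{0..<g}. real k) + real g"
    by (simp add: atLeastLessThanSuc_atLeastAtMost[symmetric])
  finally show ?thesis by (simp add: power2_eq_square algebra_simps)
qed

lemma emeasure_le_uniform:
  assumes X: "X \<in> borel_measurable M"
    and unif: "distr M lborel X = uniform_measure lborel {0..\<Psi>}"
    and "0 < \<Psi>" "0 \<le> c" "c \<le> \<Psi>"
  shows "emeasure M {\<omega>\<in>space M. X \<omega> \<le> c} = ennreal (c / \<Psi>)"
proof -
  have "{\<omega>\<in>space M. X \<omega> \<le> c} = X -` {..c} \<inter> space M" by auto
  then have "emeasure M {\<omega>\<in>space M. X \<omega> \<le> c} = emeasure (distr M lborel X) {..c}"
    using X by (simp add: emeasure_distr)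
  also have "\<dots> = emeasure lborel ({0..\<Psi>} \<inter> {..c}) / emeasure lborel {0..\<Psi>}"
    using unif by simp
  also have "{0..\<Psi>} \<inter> {..c} = {0..c}" using assms(5) by auto
  finally show ?thesis using assms(3,4) by (simp add: divide_ennreal)
qed

lemma sum_emeasure_le_nn_integral_count:
  assumes "\<And>j. j \<in> W \<Longrightarrow> A j \<in> sets M" "\<And>j. j \<in> W \<Longrightarrow> A j \<subseteq> B j"
  shows "(\<Sum>j\<in>W. emeasure M (A j)) \<le> (\<integral>\<^sup>+ \<omega>. (\<Sum>j\<in>W. indicator (B j) \<omega>) \<partial>M)"
proof -
  have "(\<Sum>j\<in>W. emeasure M (A j)) = (\<integral>\<^sup>+ \<omega>. (\<Sum>j\<in>W. indicator (A j) \<omega>) \<partial>M)"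
    using assms(1) by (simp add: nn_integral_sum)
  also have "\<dots> \<le> (\<integral>\<^sup>+ \<omega>. (\<Sum>j\<in>W. indicator (B j) \<omega>) \<partial>M)"
    using assms(2) by (intro nn_integral_mono sum_mono) (auto split: split_indicator)
  finally show ?thesis .
qed

theorem theorem3p6:
  fixes M :: "'w measure" and f :: "'w \<Rightarrow> 'a" and b :: "nat \<Rightarrow> 'a"
    and d :: "'a \<Rightarrow> 'a \<Rightarrow> real" and \<Psi> \<delta> :: real and m i \<gamma> :: nat
  assumes "prob_space M"
    and nonneg: "\<And>x y. 0 \<le> d x y"
    and sym: "\<And>x y. d x y = d y x"
    and tri: "\<And>x y z. d x z \<le> d x y + d y z"
    and step: "\<And>j. 1 \<le> j \<Longrightarrow> j < m \<Longrightarrow> d (b j) (b (Suc j)) \<le> \<delta>"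
    and "\<Psi> > 0" and "\<delta> > 0"
    and meas: "(\<lambda>\<omega>. d (f \<omega>) (b i)) \<in> borel_measurable M"
    and unif: "distr M lborel (\<lambda>\<omega>. d (f \<omega>) (b i)) = uniform_measure lborel {0..\<Psi>}"
    and gamma: "real \<gamma> = \<Psi> / \<delta>"
    and "1 \<le> int i - int \<gamma>" and "i + \<gamma> \<le> m"
  shows "(\<integral>\<^sup>+ \<omega>. (\<Sum>j\<in>{i - \<gamma>..i + \<gamma>}.
            indicator {\<omega>. strong_match d \<Psi> (f \<omega>) (b j)} \<omega>) \<partial>M) \<ge> ennreal (real \<gamma>)"
proof -
  define W where "W = {i - \<gamma>..i + \<gamma>}"
  define X where "X = (\<lambda>\<omega>. d (f \<omega>) (b i))"
  define c where "c = (\<lambda>j::nat. (real \<gamma> - \<bar>real j - real i\<bar>) * \<delta>)"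
  define A where "A = (\<lambda>j. {\<omega>\<in>space M. X \<omega> \<le> c j})"
  have "\<gamma> < i" "W \<subseteq> {1..m}" using assms(11,12) by (auto simp: W_def)
  have \<Psi>: "\<Psi> = real \<gamma> * \<delta>" "real \<gamma> > 0" using gamma assms(6,7) by auto
  have c_range: "0 \<le> c j" "c j \<le> \<Psi>" if "j \<in> W" for j
    using that \<open>\<gamma> < i\<close> assms(7) by (auto simp: W_def c_def \<Psi>(1) mult_le_cancel_right)
  have "A j \<subseteq> {\<omega>. strong_match d \<Psi> (f \<omega>) (b j)}" if "j \<in> W" for j
    using strong_match_within_window[where b=b and i=i and j=j, OF sym tri step]
      that \<open>W \<subseteq> {1..m}\<close> \<open>\<gamma> < i\<close>
    by (auto simp: A_def X_def c_def W_def \<Psi>(1) algebra_simps)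
  moreover have "A j \<in> sets M" for j
    using meas unfolding A_def X_def by measurable
  ultimately have "(\<Sum>j\<in>W. emeasure M (A j)) \<le> (\<integral>\<^sup>+ \<omega>. (\<Sum>j\<in>W.
            indicator {\<omega>. strong_match d \<Psi> (f \<omega>) (b j)} \<omega>) \<partial>M)"
    by (intro sum_emeasure_le_nn_integral_count)
  moreover have "(\<Sum>j\<in>W. emeasure M (A j)) = ennreal (real \<gamma>)"
  proof -
    have "(\<Sum>j\<in>W. emeasure M (A j)) = (\<Sum>j\<in>W. ennreal (c j / \<Psi>))"
      using emeasure_le_uniform[OF meas unif] c_range assms(6) by (simp add: A_def X_def)
    also have "\<dots> = ennreal (\<Sum>j\<in>W. (real \<gamma> - \<bar>real j - real i\<bar>) / real \<gamma>)"
      using c_range assms(6,7) by (subst sum_ennreal) (auto simp: c_def \<Psi>(1) zero_le_mult_iff)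
    also have "(\<Sum>j\<in>W. (real \<gamma> - \<bar>real j - real i\<bar>) / real \<gamma>) = real \<gamma>"
      using sum_tent_eq_square[of \<gamma> i] \<open>\<gamma> < i\<close> \<Psi>(2)
      by (simp add: W_def power2_eq_square flip: sum_divide_distrib)
    finally show ?thesis .
  qed
  ultimately show ?thesis unfolding W_def by simp
qed

end
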